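(* Consider the half-duplex (HD) single-stage relay selection (SRS) scheme described in the context with $K\ge1$ relays, with $\varpi=0$, thresholds $\gamma_{th_j}=2^{2R_{D_j}}-1$ for $j=1,2$, and power coefficients satisfying $0<a_1<a_2$, $a_1+a_2=1$, $a_2>a_1\gamma_{th_2}$. Then its diversity order equals the number of relays: $$-\lim_{\rho\to\infty}\frac{\log P_{SRS}^{HD}(\rho)}{\log\rho}=K .$$
   Context: Network model. A base station (BS) is at the origin of the plane. There are $K\ge 1$ relays $R_1,\dots,R_K$ whose positions are i.i.d. uniformly distributed in the disc of radius $R_{\mathcal D}>0$ centred at the origin; $d_{SR_i}$ is the distance from the BS to $R_i$. Two users $D_1,D_2$ are at fixed points of the plane at distances $d_1,d_2>0$ from the BS, and $d_{R_iD_j}$ is the Euclidean distance between $R_i$ and $D_j$. Let $\alpha>0$ be the path loss exponent. The random variables $g_{SR_i}$, $g_{R_iD_1}$, $g_{R_iD_2}$ ($i=1,\dots,K$) are exponentially distributed with mean $1$ (squared magnitudes of $\mathcal{CN}(0,1)$ Rayleigh coefficients), $Z_i$ is exponentially distributed with mean $\Omega_{LI}>0$, and all of these are mutually independent and independent of the relay positions. Put $X_i=g_{SR_i}/(1+d_{SR_i}^\alpha)$ and $Y_{ji}=g_{R_iD_j}/(1+d_{R_iD_j}^\alpha)$. Let $\rho>0$ be the transmit SNR, $a_1,a_2$ power allocation coefficients, and $\varpi\in\{0,1\}$ the duplex factor. Define $\gamma_{D_2\to R_i}=\frac{\rho X_i a_2}{\rho X_i a_1+\rho\varpi Z_i+1}$,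 $\gamma^{(i)}_{D_2\to D_1}=\frac{\rho Y_{1i}a_2}{\rho Y_{1i}a_1+1}$, $\gamma^{(i)}_{D_2}=\frac{\rho Y_{2i}a_2}{\rho Y_{2i}a_1+1}$. Target rates $R_{D_1},R_{D_2}>0$ are given; in HD mode $\varpi=0$ and $\gamma_{th_j}=2^{2R_{D_j}}-1$. SRS scheme: with $W_i=\min\{\gamma_{D_2\to R_i},\gamma^{(i)}_{D_2\to D_1},\gamma^{(i)}_{D_2}\}$, the outage probability is $P_{SRS}(\rho)=\Pr(\max_{1\le i\le K}W_i<\gamma_{th_2})$; $P_{SRS}^{HD}$ denotes it in HD mode. *)

theory Defs
  imports "HOL-Probability.Probability"
begin

text \<open>The plane is modelled as the complex numbers; the base station sits at 0.
 Per-relay randomness: (position, g_SR, g_RD1, g_RD2, Z), all independent.\<close>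

definition exp_measure :: "real \<Rightarrow> real measure" where
  "exp_measure mean = density lborel (\<lambda>x. ennreal (exponential_density (1 / mean) x))"

definition relay_measure :: "real \<Rightarrow> real \<Rightarrow> (complex \<times> real \<times> real \<times> real \<times> real) measure" where
  "relay_measure RD OmegaLI =
     uniform_measure lborel (cball (0::complex) RD) \<Otimes>\<^sub>M
     (exp_measure 1 \<Otimes>\<^sub>M (exp_measure 1 \<Otimes>\<^sub>M (exp_measure 1 \<Otimes>\<^sub>M exp_measure OmegaLI)))"

definition network_measure :: "nat \<Rightarrow> real \<Rightarrow> real \<Rightarrow> (nat \<Rightarrow> complex \<times> real \<times> real \<times> real \<times> real) measure" where
  "network_measure K RD OmegaLI = PiM {..<K} (\<lambda>_. relay_measure RD OmegaLI)"

definition sinr_relay :: "real \<Rightarrow> real \<Rightarrow> real \<Rightarrow> real \<Rightarrow> real \<Rightarrow> real \<Rightarrow> real" where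
  "sinr_relay \<rho> a1 a2 w X Z = \<rho> * X * a2 / (\<rho> * X * a1 + \<rho> * w * Z + 1)"

definition sinr_user :: "real \<Rightarrow> real \<Rightarrow> real \<Rightarrow> real \<Rightarrow> real" where
  "sinr_user \<rho> a1 a2 Y = \<rho> * Y * a2 / (\<rho> * Y * a1 + 1)"

definition W_relay ::
  "real \<Rightarrow> complex \<Rightarrow> complex \<Rightarrow> real \<Rightarrow> real \<Rightarrow> real \<Rightarrow> real \<Rightarrow>
   complex \<times> real \<times> real \<times> real \<times> real \<Rightarrow> real" where
  "W_relay alpha D1 D2 \<rho> a1 a2 w r =
     (case r of (p, gSR, gRD1, gRD2, Z) \<Rightarrow>
       let X = gSR / (1 + cmod p powr alpha);
           Y1 = gRD1 / (1 + cmod (p - D1) powr alpha);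
           Y2 = gRD2 / (1 + cmod (p - D2) powr alpha)
       in min (sinr_relay \<rho> a1 a2 w X Z) (min (sinr_user \<rho> a1 a2 Y1) (sinr_user \<rho> a1 a2 Y2)))"

definition P_SRS ::
  "nat \<Rightarrow> real \<Rightarrow> real \<Rightarrow> real \<Rightarrow> complex \<Rightarrow> complex \<Rightarrow> real \<Rightarrow> real \<Rightarrow> real \<Rightarrow> real \<Rightarrow> real \<Rightarrow> real" where
  "P_SRS K RD OmegaLI alpha D1 D2 a1 a2 w gth2 \<rho> =
     measure (network_measure K RD OmegaLI)
       {\<omega> \<in> space (network_measure K RD OmegaLI).
          Max ((\<lambda>i. W_relay alpha D1 D2 \<rho> a1 a2 w (\<omega> i)) ` {..<K}) < gth2}"

definition P_SRS_HD where
  "P_SRS_HD K RD OmegaLI alpha D1 D2 a1 a2 gth2 \<rho> = P_SRS K RD OmegaLI alpha D1 D2 a1 a2 0 gth2 \<rho>"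

end

theory Submission
  imports Defs "HOL-Real_Asymp.Real_Asymp"
begin

text \<open>In half-duplex mode a relay is in outage exactly when one of its three links has received
SNR \<open>\<rho> \<cdot> gain / path loss\<close> below \<open>t = \<gamma> / (a\<^sub>2 - a\<^sub>1 \<gamma>)\<close>. Relays stay in the
disc, so path losses lie between 1 and a constant, and an exponential gain falls below \<open>x\<close>
with probability about \<open>x\<close> for small \<open>x\<close>. Hence the outage probability \<open>q(\<rho>)\<close> of a single
relay lies between two constant multiples of \<open>1/\<rho>\<close>. The relays are i.i.d., so the
scheme is in outage with probability \<open>q(\<rho>)\<^sup>K\<close>, and \<open>-ln(q(\<rho>)\<^sup>K) / ln \<rho> \<rightarrow> K\<close>.\<close>

lemma prob_space_uniform_disc:
  assumes "RD > 0" shows "prob_space (uniform_measure lborel (cball (0::complex) RD))"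
proof (rule prob_space_uniform_measure)
  show "emeasure lborel (cball (0::complex) RD) \<noteq> 0"
    using assms by (simp add: emeasure_cball unit_ball_vol_2)
  show "emeasure lborel (cball (0::complex) RD) \<noteq> \<infinity>"
    using emeasure_lborel_cball_finite[of 0 RD] by (simp add: less_top[symmetric])
qed

lemma prob_space_exp_measure: "m > 0 \<Longrightarrow> prob_space (exp_measure m)"
  unfolding exp_measure_def by (intro prob_space_exponential_density) simp

lemma space_exp_measure [simp]: "space (exp_measure m) = UNIV"
  and sets_exp_measure [simp, measurable_cong]: "sets (exp_measure m) = sets borel"
  unfolding exp_measure_def by auto

lemma measure_exp_measure_atMost:
  assumes "m > 0" "x \<ge> 0"
  shows "measure (exp_measure m) {..x} = 1 - exp (- x / m)"
  using emeasure_erlang_density[of "1 / m" 0 x] assms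
  by (simp add: exp_measure_def measure_def erlang_CDF_0)

lemma AE_exp_measure_nonneg: "AE x in exp_measure m. 0 \<le> x"
  unfolding exp_measure_def by (subst AE_density) (auto simp: exponential_density_def)

lemma AE_uniform_disc: "AE p in uniform_measure lborel (cball (0::complex) RD). cmod p \<le> RD"
  by (rule AE_uniform_measureI) auto

lemma AE_pair_prob_space:
  assumes "prob_space M1" "prob_space M2"
    and [measurable]: "Measurable.pred M1 P" "Measurable.pred M2 Q"
    and "AE x in M1. P x" "AE y in M2. Q y"
  shows "AE z in M1 \<Otimes>\<^sub>M M2. P (fst z) \<and> Q (snd z)"
proof -
  interpret pair_prob_space M1 M2
    using assms(1,2) by (simp add: pair_prob_space_def pair_sigma_finite_def prob_space_imp_sigma_finite)
  show ?thesis
    by (rule AE_pair_measure) (use assms(5,6) in auto)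
qed

lemma prob_space_relay_measure:
  assumes "RD > 0" "Om > 0" shows "prob_space (relay_measure RD Om)"
  unfolding relay_measure_def
  by (intro prob_space_pair prob_space_uniform_disc prob_space_exp_measure assms) simp_all

lemma AE_relay_measure_support:
  assumes "RD > 0" "Om > 0"
  shows "AE (p, gSR, gRD1, gRD2, Z) in relay_measure RD Om.
           cmod p \<le> RD \<and> 0 \<le> gSR \<and> 0 \<le> gRD1 \<and> 0 \<le> gRD2 \<and> 0 \<le> Z"
proof -
  note prob = prob_space_pair prob_space_uniform_disc prob_space_exp_measure assms
  have "AE z in exp_measure 1 \<Otimes>\<^sub>M exp_measure Om. 0 \<le> fst z \<and> 0 \<le> snd z"
    by (rule AE_pair_prob_space) (simp_all add: prob AE_exp_measure_nonneg)
  then have "AE z in exp_measure 1 \<Otimes>\<^sub>M (exp_measure 1 \<Otimes>\<^sub>M exp_measure Om).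
      0 \<le> fst z \<and> 0 \<le> fst (snd z) \<and> 0 \<le> snd (snd z)"
    by (rule AE_pair_prob_space[rotated 5]) (simp_all add: prob AE_exp_measure_nonneg)
  then have "AE z in exp_measure 1 \<Otimes>\<^sub>M (exp_measure 1 \<Otimes>\<^sub>M (exp_measure 1 \<Otimes>\<^sub>M exp_measure Om)).
      0 \<le> fst z \<and> 0 \<le> fst (snd z) \<and> 0 \<le> fst (snd (snd z)) \<and> 0 \<le> snd (snd (snd z))"
    by (rule AE_pair_prob_space[rotated 5]) (simp_all add: prob AE_exp_measure_nonneg)
  then have "AE z in relay_measure RD Om. cmod (fst z) \<le> RD \<and>
      0 \<le> fst (snd z) \<and> 0 \<le> fst (snd (snd z)) \<and> 0 \<le> fst (snd (snd (snd z))) \<and> 0 \<le> snd (snd (snd (snd z)))"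
    unfolding relay_measure_def
    by (rule AE_pair_prob_space[rotated 5]) (simp_all add: prob AE_uniform_disc)
  then show ?thesis
    by (simp add: case_prod_beta)
qed

lemma measure_pair_prob_space_Times:
  assumes "prob_space M1" "prob_space M2" "A \<in> sets M1" "B \<in> sets M2"
  shows "measure (M1 \<Otimes>\<^sub>M M2) (A \<times> B) = measure M1 A * measure M2 B"
proof -
  interpret pair_prob_space M1 M2
    using assms(1,2) by (simp add: pair_prob_space_def pair_sigma_finite_def prob_space_imp_sigma_finite)
  show ?thesis
    using assms(3,4) by (simp add: measure_def M2.emeasure_pair_measure_Times enn2real_mult)
qed

lemma measure_relay_measure_gain_atMost:
  assumes "RD > 0" "Om > 0" "u \<ge> 0"
  shows "measure (relay_measure RD Om) (UNIV \<times> {..u} \<times> UNIV \<times> UNIV \<times> UNIV) = 1 - exp (- u)"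
    and "measure (relay_measure RD Om) (UNIV \<times> UNIV \<times> {..u} \<times> UNIV \<times> UNIV) = 1 - exp (- u)"
    and "measure (relay_measure RD Om) (UNIV \<times> UNIV \<times> UNIV \<times> {..u} \<times> UNIV) = 1 - exp (- u)"
  using prob_space.prob_space[OF prob_space_uniform_disc[OF assms(1)]]
    prob_space.prob_space[OF prob_space_exp_measure[of 1]]
    prob_space.prob_space[OF prob_space_exp_measure[OF assms(2)]] assms
  by (simp_all add: relay_measure_def measure_pair_prob_space_Times prob_space_pair
      prob_space_uniform_disc prob_space_exp_measure pair_measureI measure_exp_measure_atMost
      del: UNIV_Times_UNIV)

lemma W_relay_measurable [measurable]:
  "W_relay alpha D1 D2 \<rho> a1 a2 w \<in> borel_measurable (relay_measure RD Om)"
  unfolding W_relay_def relay_measure_def sinr_relay_def sinr_user_def Let_def exp_measure_def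
  by measurable

lemma P_SRS_eq_power:
  assumes "K \<ge> 1" "RD > 0" "Om > 0"
  shows "P_SRS K RD Om alpha D1 D2 a1 a2 w g \<rho> =
    measure (relay_measure RD Om) {r \<in> space (relay_measure RD Om). W_relay alpha D1 D2 \<rho> a1 a2 w r < g} ^ K"
proof -
  let ?R = "relay_measure RD Om"
  let ?A = "{r \<in> space ?R. W_relay alpha D1 D2 \<rho> a1 a2 w r < g}"
  interpret R: prob_space ?R using prob_space_relay_measure assms by blast
  interpret finite_product_prob_space "\<lambda>_. ?R" "{..<K}"
    by unfold_locales simp
  have "{..<K} \<noteq> {}" using assms by (auto simp: lessThan_empty_iff)
  then have "{\<omega> \<in> space (network_measure K RD Om).
          Max ((\<lambda>i. W_relay alpha D1 D2 \<rho> a1 a2 w (\<omega> i)) ` {..<K}) < g} = Pi\<^sub>E {..<K} (\<lambda>_. ?A)"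
    unfolding network_measure_def space_PiM by (auto simp: PiE_def Pi_def)
  then have "P_SRS K RD Om alpha D1 D2 a1 a2 w g \<rho> = measure (PiM {..<K} (\<lambda>_. ?R)) (Pi\<^sub>E {..<K} (\<lambda>_. ?A))"
    unfolding P_SRS_def network_measure_def by simp
  also have "\<dots> = (\<Prod>i<K. measure ?R ?A)"
    by (rule finite_measure_PiM_emb) measurable
  finally show ?thesis by simp
qed

lemma sinr_user_less_iff:
  assumes "0 < a1" "a1 * g < a2" "0 \<le> \<rho> * Y"
  shows "sinr_user \<rho> a1 a2 Y < g \<longleftrightarrow> \<rho> * Y < g / (a2 - a1 * g)"
proof -
  have "0 < \<rho> * Y * a1 + 1"
    using assms by (intro add_nonneg_pos) simp_all
  then have "sinr_user \<rho> a1 a2 Y < g \<longleftrightarrow> \<rho> * Y * a2 < g * (\<rho> * Y * a1 + 1)"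
    by (simp add: sinr_user_def divide_less_eq)
  also have "\<dots> \<longleftrightarrow> (\<rho> * Y) * (a2 - a1 * g) < g"
    by (simp add: algebra_simps)
  also have "\<dots> \<longleftrightarrow> \<rho> * Y < g / (a2 - a1 * g)"
    using assms by (simp add: less_divide_eq)
  finally show ?thesis .
qed

lemma W_relay_HD_less_iff:
  assumes "0 < a1" "a1 * g < a2" "0 \<le> \<rho>" "0 \<le> gSR" "0 \<le> gRD1" "0 \<le> gRD2"
  shows "W_relay alpha D1 D2 \<rho> a1 a2 0 (p, gSR, gRD1, gRD2, Z) < g \<longleftrightarrow>
    \<rho> * (gSR / (1 + cmod p powr alpha)) < g / (a2 - a1 * g) \<or>
    \<rho> * (gRD1 / (1 + cmod (p - D1) powr alpha)) < g / (a2 - a1 * g) \<or>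
    \<rho> * (gRD2 / (1 + cmod (p - D2) powr alpha)) < g / (a2 - a1 * g)"
proof -
  have "sinr_relay \<rho> a1 a2 0 X Z = sinr_user \<rho> a1 a2 X" for X
    by (simp add: sinr_relay_def sinr_user_def)
  then show ?thesis
    using assms by (simp add: W_relay_def Let_def min_less_iff_disj sinr_user_less_iff add_pos_nonneg)
qed

lemma one_minus_exp_neg_ge_half:
  fixes a :: real assumes "0 \<le> a" "a \<le> 1"
  shows "a / 2 \<le> 1 - exp (- a)"
proof -
  have "exp (- a) \<le> 1 / (1 + a)"
    using exp_ge_add_one_self[of a] assms by (simp add: exp_minus field_simps)
  also have "\<dots> \<le> 1 - a / 2"
    using assms mult_left_le[of a a] by (simp add: field_simps)
  finally show ?thesis by simp
qed

lemma tendsto_neg_ln_power_over_ln: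
  fixes q :: "real \<Rightarrow> real"
  assumes "0 < c" and bounds: "eventually (\<lambda>\<rho>. c / \<rho> \<le> q \<rho> \<and> q \<rho> \<le> C / \<rho>) at_top"
  shows "((\<lambda>\<rho>. - ln (q \<rho> ^ K) / ln \<rho>) \<longlongrightarrow> real K) at_top"
proof -
  have pos: "0 < q \<rho>"
    and lower: "(ln \<rho> - ln C) / ln \<rho> \<le> - ln (q \<rho>) / ln \<rho>"
    and upper: "- ln (q \<rho>) / ln \<rho> \<le> (ln \<rho> - ln c) / ln \<rho>"
    if "1 < \<rho>" "c / \<rho> \<le> q \<rho>" "q \<rho> \<le> C / \<rho>" for \<rho>
  proof -
    have "0 < c / \<rho>"
      using that \<open>0 < c\<close> by simp
    then show "0 < q \<rho>"
      using that by linarith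
    have "0 < C / \<rho>"
      using \<open>0 < c / \<rho>\<close> that by linarith
    then have "0 < C"
      using that by (simp add: zero_less_divide_iff)
    with \<open>0 < q \<rho>\<close> have "ln c - ln \<rho> \<le> ln (q \<rho>)" "ln (q \<rho>) \<le> ln C - ln \<rho>"
      using that \<open>0 < c\<close> ln_mono[of "c / \<rho>" "q \<rho>"] ln_mono[of "q \<rho>" "C / \<rho>"]
      by (simp_all add: ln_div)
    moreover have "0 \<le> ln \<rho>"
      using that by simp
    ultimately show "(ln \<rho> - ln C) / ln \<rho> \<le> - ln (q \<rho>) / ln \<rho>"
      and "- ln (q \<rho>) / ln \<rho> \<le> (ln \<rho> - ln c) / ln \<rho>"
      unfolding minus_divide_left by (intro divide_right_mono; linarith)+
  qed
  have ev: "eventually (\<lambda>\<rho>. 1 < \<rho> \<and> c / \<rho> \<le> q \<rho> \<and> q \<rho> \<le> C / \<rho>) at_top"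
    using bounds eventually_gt_at_top[of 1] by (simp add: eventually_conj_iff)
  have "((\<lambda>\<rho>. - ln (q \<rho>) / ln \<rho>) \<longlongrightarrow> 1) at_top"
  proof (rule tendsto_sandwich)
    show "eventually (\<lambda>\<rho>. (ln \<rho> - ln C) / ln \<rho> \<le> - ln (q \<rho>) / ln \<rho>) at_top"
      using ev by (rule eventually_mono) (use lower in blast)
    show "eventually (\<lambda>\<rho>. - ln (q \<rho>) / ln \<rho> \<le> (ln \<rho> - ln c) / ln \<rho>) at_top"
      using ev by (rule eventually_mono) (use upper in blast)
    show "((\<lambda>\<rho>. (ln \<rho> - ln C) / ln \<rho>) \<longlongrightarrow> 1) at_top"
      and "((\<lambda>\<rho>. (ln \<rho> - ln c) / ln \<rho>) \<longlongrightarrow> 1) at_top"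
      by real_asymp+
  qed
  then have "((\<lambda>\<rho>. real K * (- ln (q \<rho>) / ln \<rho>)) \<longlongrightarrow> real K) at_top"
    using tendsto_mult_left[of _ 1 _ "real K"] by (simp only: mult_1_right)
  moreover have "eventually (\<lambda>\<rho>. real K * (- ln (q \<rho>) / ln \<rho>) = - ln (q \<rho> ^ K) / ln \<rho>) at_top"
    using ev by (rule eventually_mono) (use pos in \<open>simp add: ln_realpow\<close>)
  ultimately show ?thesis
    by (rule Lim_transform_eventually)
qed

locale hd_relay_link =
  fixes RD Om alpha :: real and D1 D2 :: complex and a1 a2 g :: real
  assumes RD_pos: "RD > 0" and Om_pos: "Om > 0" and alpha_pos: "alpha > 0"
    and a1_pos: "0 < a1" and g_pos: "0 < g"
    and threshold_below_ceiling: "a1 * g < a2"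
      \<comment> \<open>the SINRs increase to \<open>a2 / a1\<close> as \<open>\<rho> \<rightarrow> \<infinity>\<close>; otherwise every relay is always in outage\<close>
begin

definition outage :: "real \<Rightarrow> real" where
  "outage \<rho> = measure (relay_measure RD Om)
     {r \<in> space (relay_measure RD Om). W_relay alpha D1 D2 \<rho> a1 a2 0 r < g}"

definition snr_threshold :: real where
  "snr_threshold = g / (a2 - a1 * g)"

definition max_path_loss :: real where
  "max_path_loss = 1 + (RD + cmod D1 + cmod D2) powr alpha"

lemma snr_threshold_pos: "0 < snr_threshold"
  using g_pos threshold_below_ceiling by (simp add: snr_threshold_def)

lemma outage_event_measurable:
  "{r \<in> space (relay_measure RD Om). W_relay alpha D1 D2 \<rho> a1 a2 0 r < g} \<in> sets (relay_measure RD Om)"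
  by measurable

lemma outage_lower_bound:
  assumes "snr_threshold \<le> \<rho>"
  shows "snr_threshold / (4 * \<rho>) \<le> outage \<rho>"
proof -
  interpret prob_space "relay_measure RD Om"
    using prob_space_relay_measure RD_pos Om_pos by blast
  define a where "a = snr_threshold / (2 * \<rho>)"
  have a: "0 < a" "a \<le> 1"
    using assms snr_threshold_pos by (auto simp: a_def)
  have "AE r in relay_measure RD Om. r \<in> UNIV \<times> {..a} \<times> UNIV \<times> UNIV \<times> UNIV \<longrightarrow>
           W_relay alpha D1 D2 \<rho> a1 a2 0 r < g"
    using AE_relay_measure_support[OF RD_pos Om_pos]
  proof eventually_elim
    case (elim r)
    obtain p gSR gRD1 gRD2 Z where r: "r = (p, gSR, gRD1, gRD2, Z)"
      by (cases r) auto
    show ?case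
    proof
      assume "r \<in> UNIV \<times> {..a} \<times> UNIV \<times> UNIV \<times> UNIV"
      then have "gSR \<le> a" by (simp add: r)
      have "gSR / (1 + cmod p powr alpha) \<le> gSR / 1"
        using elim r by (intro divide_left_mono) (auto simp: add_pos_nonneg)
      then have "\<rho> * (gSR / (1 + cmod p powr alpha)) \<le> \<rho> * a"
        using \<open>gSR \<le> a\<close> assms snr_threshold_pos by (intro mult_left_mono) auto
      also have "\<dots> < snr_threshold"
        using assms snr_threshold_pos by (simp add: a_def)
      finally show "W_relay alpha D1 D2 \<rho> a1 a2 0 r < g"
        using elim r assms snr_threshold_pos a1_pos threshold_below_ceiling
        by (subst r, subst W_relay_HD_less_iff) (auto simp: snr_threshold_def)
    qed
  qed
  then have "measure (relay_measure RD Om) (UNIV \<times> {..a} \<times> UNIV \<times> UNIV \<times> UNIV) \<le> outage \<rho>"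
    unfolding outage_def by (intro finite_measure_mono_AE outage_event_measurable) auto
  moreover have "a / 2 \<le> measure (relay_measure RD Om) (UNIV \<times> {..a} \<times> UNIV \<times> UNIV \<times> UNIV)"
    using a one_minus_exp_neg_ge_half[of a]
    by (simp add: measure_relay_measure_gain_atMost RD_pos Om_pos del: UNIV_Times_UNIV)
  ultimately show ?thesis
    by (simp add: a_def)
qed

lemma outage_upper_bound:
  assumes "0 < \<rho>"
  shows "outage \<rho> \<le> 3 * snr_threshold * max_path_loss / \<rho>"
proof -
  interpret prob_space "relay_measure RD Om"
    using prob_space_relay_measure RD_pos Om_pos by blast
  define u where "u = snr_threshold * max_path_loss / \<rho>"
  have "0 \<le> u"
    using assms snr_threshold_pos by (simp add: u_def max_path_loss_def add_nonneg_nonneg)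
  let ?S0 = "UNIV \<times> {..u} \<times> UNIV \<times> UNIV \<times> UNIV"
  let ?S1 = "UNIV \<times> UNIV \<times> {..u} \<times> UNIV \<times> UNIV"
  let ?S2 = "UNIV \<times> UNIV \<times> UNIV \<times> {..u} \<times> UNIV"
  have "AE r in relay_measure RD Om. W_relay alpha D1 D2 \<rho> a1 a2 0 r < g \<longrightarrow> r \<in> ?S0 \<union> ?S1 \<union> ?S2"
    using AE_relay_measure_support[OF RD_pos Om_pos]
  proof eventually_elim
    case (elim r)
    obtain p gSR gRD1 gRD2 Z where r: "r = (p, gSR, gRD1, gRD2, Z)"
      by (cases r) auto
    have gain_le: "x \<le> u"
      if "\<rho> * (x / (1 + d powr alpha)) < snr_threshold" "0 \<le> d" "d \<le> RD + cmod D1 + cmod D2" for x d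
    proof -
      have c: "0 < 1 + d powr alpha" "1 + d powr alpha \<le> max_path_loss"
        using that alpha_pos by (auto simp: max_path_loss_def add_pos_nonneg intro: powr_mono2)
      have "x < snr_threshold * (1 + d powr alpha) / \<rho>"
        using that(1) assms c by (simp add: field_simps)
      also have "\<dots> \<le> u"
        unfolding u_def using c snr_threshold_pos assms by (intro divide_right_mono mult_left_mono) auto
      finally show ?thesis by simp
    qed
    have "cmod p \<le> RD"
      using elim by (simp add: r)
    then have "cmod p \<le> RD + cmod D1 + cmod D2"
      and "cmod (p - D1) \<le> RD + cmod D1 + cmod D2"
      and "cmod (p - D2) \<le> RD + cmod D1 + cmod D2"
      using norm_triangle_ineq4[of p D1] norm_triangle_ineq4[of p D2] norm_ge_zero[of D1] norm_ge_zero[of D2]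
      by linarith+
    then show ?case
      using elim assms a1_pos threshold_below_ceiling gain_le
      by (auto simp: r W_relay_HD_less_iff snr_threshold_def[symmetric])
  qed
  moreover have S: "?S0 \<in> sets (relay_measure RD Om)" "?S1 \<in> sets (relay_measure RD Om)"
    "?S2 \<in> sets (relay_measure RD Om)"
    unfolding relay_measure_def by (intro pair_measureI; simp)+
  ultimately have "outage \<rho> \<le> measure (relay_measure RD Om) (?S0 \<union> ?S1 \<union> ?S2)"
    unfolding outage_def by (intro finite_measure_mono_AE) auto
  also have "\<dots> \<le> measure (relay_measure RD Om) ?S0 + measure (relay_measure RD Om) ?S1
                  + measure (relay_measure RD Om) ?S2"
    using S by (intro measure_Un_le[THEN order_trans] add_right_mono measure_Un_le) auto
  also have "\<dots> = 3 * (1 - exp (- u))"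
    using \<open>0 \<le> u\<close> by (simp add: measure_relay_measure_gain_atMost RD_pos Om_pos del: UNIV_Times_UNIV)
  also have "\<dots> \<le> 3 * u"
    using exp_ge_add_one_self[of "- u"] by simp
  finally show ?thesis
    by (simp add: u_def)
qed

end

theorem mainTheorem2:
  fixes K :: nat and RD OmegaLI alpha RD1 RD2 a1 a2 :: real and D1 D2 :: complex
  assumes "K \<ge> 1" and "RD > 0" and "OmegaLI > 0" and "alpha > 0"
    and "cmod D1 > 0" and "cmod D2 > 0"
    and "RD1 > 0" and "RD2 > 0"
    and "0 < a1" and "a1 < a2" and "a1 + a2 = 1"
    and "a2 > a1 * (2 powr (2 * RD2) - 1)"
  shows "((\<lambda>\<rho>. - ln (P_SRS_HD K RD OmegaLI alpha D1 D2 a1 a2 (2 powr (2 * RD2) - 1) \<rho>) / ln \<rho>)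
           \<longlongrightarrow> real K) at_top"
proof -
  define g where "g = 2 powr (2 * RD2) - 1"
  have "0 < g"
    using \<open>RD2 > 0\<close> by (simp add: g_def)
  interpret hd_relay_link RD OmegaLI alpha D1 D2 a1 a2 g
    using assms \<open>0 < g\<close> by unfold_locales (simp_all add: g_def)
  have "eventually (\<lambda>\<rho>. snr_threshold / 4 / \<rho> \<le> outage \<rho> \<and>
                         outage \<rho> \<le> 3 * snr_threshold * max_path_loss / \<rho>) at_top"
    using eventually_ge_at_top[of snr_threshold]
    by eventually_elim (use outage_lower_bound outage_upper_bound snr_threshold_pos in auto)
  then have "((\<lambda>\<rho>. - ln (outage \<rho> ^ K) / ln \<rho>) \<longlongrightarrow> real K) at_top"
    by (rule tendsto_neg_ln_power_over_ln[rotated]) (use snr_threshold_pos in simp)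
  moreover have "P_SRS_HD K RD OmegaLI alpha D1 D2 a1 a2 g \<rho> = outage \<rho> ^ K" for \<rho>
    using assms by (simp add: P_SRS_HD_def outage_def P_SRS_eq_power)
  ultimately show ?thesis
    by (simp add: g_def)
qed

end
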